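(* Let $n=|V|\ge 4$ and suppose the designer does not know the relationship network. Then there is no valid mechanism $g:\boldsymbol\Theta\to[0,1]^V$ that is both DSIC and efficient.
   Context: Let $V=\{1,\dots,n\}$ be a finite set of agents. A relationship network on $V$ assigns to every unordered pair of distinct agents exactly one of three symmetric relations: friends, enemies, or impartial; $F_i,E_i,I_i$ denote the friends, enemies and impartials of $i$, partitioning $V\setminus\{i\}$. A state of the world is a pair consisting of a set $N\subseteq V$ of needy agents and a relationship network. Preferences: fix weights $w_f,w_e>0$; an agent with friend set $F$ and enemy set $E$ and own index $i$ ranks $p,p'\in[0,1]^V$ by $p\succ p'$ iff either $p_i>p'_i$, or $p_i=p'_i$ and $w_f\sum_{j\in F}(p_j-p'_j)-w_e\sum_{j\in E}(p_j-p'_j)>0$; $p\succsim p'$ means not $p'\succ p$. Unknown-network setting: agent $i$'s type set $\Theta_i$ consists of all triples $(N,F,E)$ with $N\subseteq V$ and $F,E$ disjoint subsets of $V\setminus\{i\}$; $\boldsymbol\Theta=\prod_{i\in V}\Theta_i$. A mechanism is $g:\boldsymbol\Theta\to[0,1]^V$; it is valid if $\sum_i g_i(\mathbf m)\le1$ for all $\mathbf m\in\boldsymbol\Theta$. It is DSIC if for all $i$, all $\mathbf m\in\boldsymbol\Theta$ and all $m'_i\in\Theta_i$, $g(\mathbf m)\succsim_{m_i} g(m'_i,\mathbf m_{-i})$, where $\succsim_{m_i}$ is the preference of agent $i$ with the friend and enemy sets given in $m_i$. At a state, the truthful profile is $m_i=(N,F_i,E_i)$ for all $i$. The mechanism is efficient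 if at every state with $N\neq\varnothing$, $\sum_{i\in N}g_i(\mathbf m)=1$ at the truthful profile $\mathbf m$. *)

theory Defs
  imports Complex_Main
begin

text \<open>Agents are V = {1..n}. A report (type) of an agent is a triple (N, F, E):
  claimed needy set, claimed friends, claimed enemies.\<close>

type_synonym report = "nat set \<times> nat set \<times> nat set"
type_synonym profile = "nat \<Rightarrow> report"
type_synonym mechanism = "profile \<Rightarrow> nat \<Rightarrow> real"

definition agents :: "nat \<Rightarrow> nat set" where
  "agents n = {1..n}"

definition type_set :: "nat \<Rightarrow> nat \<Rightarrow> report set" where
  "type_set n i = {(N, F, E). N \<subseteq> agents n \<and> F \<subseteq> agents n - {i} \<and>
                      E \<subseteq> agents n - {i} \<and> F \<inter> E = {}}"

text \<open>The product Theta of the Theta_i, i in V; coordinates outside V are fixed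
  to a dummy value so that profiles correspond bijectively to elements of Theta.\<close>
definition profiles :: "nat \<Rightarrow> profile set" where
  "profiles n = {m. (\<forall>i\<in>agents n. m i \<in> type_set n i) \<and>
                    (\<forall>i. i \<notin> agents n \<longrightarrow> m i = ({}, {}, {}))}"

definition strict_pref ::
  "real \<Rightarrow> real \<Rightarrow> nat \<Rightarrow> nat set \<Rightarrow> nat set \<Rightarrow> (nat \<Rightarrow> real) \<Rightarrow> (nat \<Rightarrow> real) \<Rightarrow> bool" where
  "strict_pref w_f w_e i F E p p' \<longleftrightarrow>
     p i > p' i \<or>
     (p i = p' i \<and> w_f * (\<Sum>j\<in>F. p j - p' j) - w_e * (\<Sum>j\<in>E. p j - p' j) > 0)"

definition weak_pref ::
  "real \<Rightarrow> real \<Rightarrow> nat \<Rightarrow> nat set \<Rightarrow> nat set \<Rightarrow> (nat \<Rightarrow> real) \<Rightarrow> (nat \<Rightarrow> real) \<Rightarrow> bool" where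
  "weak_pref w_f w_e i F E p p' \<longleftrightarrow> \<not> strict_pref w_f w_e i F E p' p"

definition is_mechanism :: "nat \<Rightarrow> mechanism \<Rightarrow> bool" where
  "is_mechanism n g \<longleftrightarrow> (\<forall>m\<in>profiles n. \<forall>i\<in>agents n. 0 \<le> g m i \<and> g m i \<le> 1)"

definition valid :: "nat \<Rightarrow> mechanism \<Rightarrow> bool" where
  "valid n g \<longleftrightarrow> (\<forall>m\<in>profiles n. (\<Sum>i\<in>agents n. g m i) \<le> 1)"

definition dsic :: "real \<Rightarrow> real \<Rightarrow> nat \<Rightarrow> mechanism \<Rightarrow> bool" where
  "dsic w_f w_e n g \<longleftrightarrow>
     (\<forall>i\<in>agents n. \<forall>m\<in>profiles n. \<forall>t\<in>type_set n i.
        weak_pref w_f w_e i (fst (snd (m i))) (snd (snd (m i))) (g m) (g (m(i := t))))"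

text \<open>A relationship network on V: symmetric friend and enemy relations on distinct
  agents, never both; all remaining pairs of distinct agents are impartial.\<close>
definition is_network :: "nat \<Rightarrow> (nat \<Rightarrow> nat \<Rightarrow> bool) \<Rightarrow> (nat \<Rightarrow> nat \<Rightarrow> bool) \<Rightarrow> bool" where
  "is_network n Fr En \<longleftrightarrow>
     (\<forall>i\<in>agents n. \<forall>j\<in>agents n.
        (Fr i j \<longleftrightarrow> Fr j i) \<and> (En i j \<longleftrightarrow> En j i) \<and> \<not> (Fr i j \<and> En i j))"

definition truthful_profile ::
  "nat \<Rightarrow> nat set \<Rightarrow> (nat \<Rightarrow> nat \<Rightarrow> bool) \<Rightarrow> (nat \<Rightarrow> nat \<Rightarrow> bool) \<Rightarrow> profile" where
  "truthful_profile n N Fr En = (\<lambda>i. if i \<in> agents n then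
      (N, {j\<in>agents n. j \<noteq> i \<and> Fr i j}, {j\<in>agents n. j \<noteq> i \<and> En i j})
    else ({}, {}, {}))"

definition efficient :: "nat \<Rightarrow> mechanism \<Rightarrow> bool" where
  "efficient n g \<longleftrightarrow>
     (\<forall>N Fr En. N \<subseteq> agents n \<longrightarrow> N \<noteq> {} \<longrightarrow> is_network n Fr En \<longrightarrow>
        (\<Sum>i\<in>N. g (truthful_profile n N Fr En) i) = 1)"

end

theory Submission
  imports Defs
begin

(* Preferences are lexicographic with the own share first, so DSIC forces every agent's own share
   to be independent of its own report: each of two reports must be weakly best against the other.
   If in addition both reports name the single friend j and no enemies, the tie on the own share
   passes the comparison on to j's share, which is then independent of the report as well.
   Take the star network in which a hub c befriends every agent except a loner z, and vary only the
   reported needy sets. By efficiency c gets 1 when everybody reports N = {c}, and z gets 1 when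
   everybody reports N = {z}. Let z report {c} and everybody else {z}. This profile is reached from
   the first one by changing reports of c and of agents whose only friend is c, so c still gets 1;
   it is reached from the second one by changing z's report only, so z still gets 1, violating
   validity. *)

lemma weak_pref_own_share:
  "weak_pref w_f w_e i F E p p' \<Longrightarrow> p' i \<le> p i"
  unfolding weak_pref_def strict_pref_def by auto

lemma weak_pref_sole_friend_share:
  assumes "weak_pref w_f w_e i {j} {} p p'" "p' i = p i" "w_f > 0"
  shows "p' j \<le> p j"
proof (rule ccontr)
  assume "\<not> p' j \<le> p j"
  with \<open>w_f > 0\<close> have "w_f * (p' j - p j) > 0" by simp
  with assms(1,2) show False unfolding weak_pref_def strict_pref_def by simp
qed

lemma dsic_unilateral_weak_pref:
  assumes "dsic w_f w_e n g" "m \<in> profiles n" "m' \<in> profiles n" "i \<in> agents n"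
    and "\<And>j. j \<noteq> i \<Longrightarrow> m' j = m j"
  shows "weak_pref w_f w_e i (fst (snd (m i))) (snd (snd (m i))) (g m) (g m')"
proof -
  have "m' = m(i := m' i)" using assms(5) by auto
  moreover have "m' i \<in> type_set n i" using assms(3,4) by (simp add: profiles_def)
  ultimately show ?thesis using assms(1,2,4) unfolding dsic_def by metis
qed

lemma dsic_own_share_invariant:
  assumes "dsic w_f w_e n g" "m \<in> profiles n" "m' \<in> profiles n" "i \<in> agents n"
    and "\<And>j. j \<noteq> i \<Longrightarrow> m' j = m j"
  shows "g m' i = g m i"
proof -
  have "g m' i \<le> g m i"
    using weak_pref_own_share[OF dsic_unilateral_weak_pref[OF assms]] .
  moreover have "g m i \<le> g m' i"
    using weak_pref_own_share[OF dsic_unilateral_weak_pref[OF assms(1,3,2,4)]] assms(5)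
    by metis
  ultimately show ?thesis by linarith
qed

lemma dsic_sole_friend_share_invariant:
  assumes "dsic w_f w_e n g" "m \<in> profiles n" "m' \<in> profiles n" "i \<in> agents n"
    and "\<And>j. j \<noteq> i \<Longrightarrow> m' j = m j"
    and "w_f > 0" "snd (m i) = ({j}, {})" "snd (m' i) = ({j}, {})"
  shows "g m' j = g m j"
proof -
  have own: "g m' i = g m i" using dsic_own_share_invariant[OF assms(1-5)] .
  have "g m' j \<le> g m j"
    using dsic_unilateral_weak_pref[OF assms(1-5)] own assms(6,7)
    by (intro weak_pref_sole_friend_share) auto
  moreover have "g m j \<le> g m' j"
    using dsic_unilateral_weak_pref[OF assms(1,3,2,4)] assms(5) own[symmetric] assms(6,8)
    by (intro weak_pref_sole_friend_share) (auto simp: eq_commute)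
  ultimately show ?thesis by linarith
qed

definition network_profile ::
  "nat \<Rightarrow> (nat \<Rightarrow> nat \<Rightarrow> bool) \<Rightarrow> (nat \<Rightarrow> nat \<Rightarrow> bool) \<Rightarrow> (nat \<Rightarrow> nat set) \<Rightarrow> profile" where
  "network_profile n Fr En r = (\<lambda>i. if i \<in> agents n then
      (r i, {j\<in>agents n. j \<noteq> i \<and> Fr i j}, {j\<in>agents n. j \<noteq> i \<and> En i j})
    else ({}, {}, {}))"

lemma truthful_profile_eq_network_profile:
  "truthful_profile n N Fr En = network_profile n Fr En (\<lambda>_. N)"
  by (simp add: truthful_profile_def network_profile_def)

lemma network_profile_in_profiles:
  assumes "is_network n Fr En" "\<And>i. i \<in> agents n \<Longrightarrow> r i \<subseteq> agents n"
  shows "network_profile n Fr En r \<in> profiles n"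
  using assms unfolding profiles_def type_set_def network_profile_def is_network_def by auto

lemma efficient_single_needy:
  assumes "efficient n g" "is_network n Fr En" "k \<in> agents n"
  shows "g (network_profile n Fr En (\<lambda>_. {k})) k = 1"
proof -
  have "(\<Sum>i\<in>{k}. g (truthful_profile n {k} Fr En) i) = 1"
    using assms unfolding efficient_def by blast
  then show ?thesis by (simp add: truthful_profile_eq_network_profile)
qed

lemma valid_two_shares:
  assumes "is_mechanism n g" "valid n g" "m \<in> profiles n"
    and "i \<in> agents n" "j \<in> agents n" "i \<noteq> j"
  shows "g m i + g m j \<le> 1"
proof -
  have "g m i + g m j = (\<Sum>k\<in>{i, j}. g m k)" using \<open>i \<noteq> j\<close> by simp
  also have "\<dots> \<le> (\<Sum>k\<in>agents n. g m k)"
    using assms unfolding is_mechanism_def by (intro sum_mono2) (auto simp: agents_def)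
  also have "\<dots> \<le> 1" using assms(2,3) unfolding valid_def by blast
  finally show ?thesis .
qed

definition star_friends :: "nat \<Rightarrow> nat \<Rightarrow> nat \<Rightarrow> nat \<Rightarrow> bool" where
  "star_friends c z i j \<longleftrightarrow> (i = c \<and> j \<notin> {c, z}) \<or> (j = c \<and> i \<notin> {c, z})"

abbreviation star_profile :: "nat \<Rightarrow> nat \<Rightarrow> nat \<Rightarrow> (nat \<Rightarrow> nat set) \<Rightarrow> profile" where
  "star_profile n c z \<equiv> network_profile n (star_friends c z) (\<lambda>_ _. False)"

lemma is_network_star: "is_network n (star_friends c z) (\<lambda>_ _. False)"
  unfolding is_network_def star_friends_def by auto

lemma star_leaf_report:
  assumes "c \<in> agents n" "a \<in> agents n" "a \<notin> {c, z}"
  shows "snd (star_profile n c z r a) = ({c}, {})"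
  using assms unfolding network_profile_def star_friends_def by auto

lemma star_hub_share_step:
  assumes "dsic w_f w_e n g" "w_f > 0" "c \<in> agents n" "a \<in> agents n" "a \<noteq> z"
    and "\<And>i. i \<in> agents n \<Longrightarrow> r i \<subseteq> agents n" "\<And>i. i \<in> agents n \<Longrightarrow> r' i \<subseteq> agents n"
    and "\<And>i. i \<noteq> a \<Longrightarrow> r' i = r i"
  shows "g (star_profile n c z r') c = g (star_profile n c z r) c"
proof -
  let ?m = "star_profile n c z r" and ?m' = "star_profile n c z r'"
  have m: "?m \<in> profiles n" and m': "?m' \<in> profiles n"
    using assms(6,7) by (simp_all add: network_profile_in_profiles is_network_star)
  have agree: "?m' j = ?m j" if "j \<noteq> a" for j
    using assms(8) that by (simp add: network_profile_def)
  show ?thesis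
  proof (cases "a = c")
    case True
    then show ?thesis using dsic_own_share_invariant[OF assms(1) m m' assms(4) agree] by simp
  next
    case False
    then show ?thesis
      using dsic_sole_friend_share_invariant[OF assms(1) m m' assms(4) agree assms(2)]
        star_leaf_report[OF assms(3,4)] \<open>a \<noteq> z\<close> by simp
  qed
qed

lemma star_hub_share_invariant:
  assumes "dsic w_f w_e n g" "w_f > 0" "c \<in> agents n"
    and "\<And>i. i \<in> agents n \<Longrightarrow> r i \<subseteq> agents n" "\<And>i. i \<in> agents n \<Longrightarrow> r' i \<subseteq> agents n"
    and "r' z = r z"
  shows "g (star_profile n c z r') c = g (star_profile n c z r) c"
proof -
  have chain: "g (star_profile n c z r') c = g (star_profile n c z r) c"
    if "finite A" "A \<subseteq> agents n - {z}" "\<And>i. i \<in> agents n \<Longrightarrow> r' i \<subseteq> agents n"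
      and "\<And>i. i \<in> agents n - A \<Longrightarrow> r' i = r i" for A r'
    using that
  proof (induction A arbitrary: r' rule: finite_induct)
    case empty
    then have "star_profile n c z r' = star_profile n c z r" by (auto simp: network_profile_def)
    then show ?case by simp
  next
    case (insert a A)
    let ?r'' = "r'(a := r a)"
    have "g (star_profile n c z r') c = g (star_profile n c z ?r'') c"
      using insert.prems assms(4) by (intro star_hub_share_step[OF assms(1-3)]) auto
    also have "\<dots> = g (star_profile n c z r) c"
      using insert.prems assms(4) by (intro insert.IH) auto
    finally show ?case .
  qed
  show ?thesis
    by (rule chain[of "agents n - {z}"]) (use assms(5,6) in \<open>auto simp: agents_def\<close>)
qed

lemma no_dsic_efficient_mechanism:
  assumes "n \<ge> 2" "w_f > 0"
  shows "\<not> (is_mechanism n g \<and> valid n g \<and> dsic w_f w_e n g \<and> efficient n g)"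
proof
  assume "is_mechanism n g \<and> valid n g \<and> dsic w_f w_e n g \<and> efficient n g"
  then have mech: "is_mechanism n g" and val: "valid n g"
    and dsic: "dsic w_f w_e n g" and eff: "efficient n g" by auto
  define c z :: nat where "c = 1" and "z = 2"
  have agents: "c \<in> agents n" "z \<in> agents n" "c \<noteq> z"
    using assms(1) by (auto simp: c_def z_def agents_def)
  define r :: "nat \<Rightarrow> nat set" where "r = (\<lambda>_. {z})(z := {c})"
  have r: "r i \<subseteq> agents n" for i using agents by (simp add: r_def)
  have "g (star_profile n c z r) c = g (star_profile n c z (\<lambda>_. {c})) c"
    using agents r by (intro star_hub_share_invariant[OF dsic assms(2)]) (auto simp: r_def)
  also have "\<dots> = 1" using efficient_single_needy[OF eff is_network_star agents(1)] .
  finally have hub: "g (star_profile n c z r) c = 1" .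
  have "g (star_profile n c z r) z = g (star_profile n c z (\<lambda>_. {z})) z"
    using agents r
    by (intro dsic_own_share_invariant[OF dsic] network_profile_in_profiles is_network_star)
       (auto simp: r_def network_profile_def)
  also have "\<dots> = 1" using efficient_single_needy[OF eff is_network_star agents(2)] .
  finally have loner: "g (star_profile n c z r) z = 1" .
  have "star_profile n c z r \<in> profiles n"
    using r by (simp add: network_profile_in_profiles is_network_star)
  from valid_two_shares[OF mech val this agents] hub loner show False by simp
qed

theorem theorem4:
  fixes n :: nat and w_f w_e :: real
  assumes "n \<ge> 4" and "w_f > 0" and "w_e > 0"
  shows "\<not> (\<exists>g. is_mechanism n g \<and> valid n g \<and> dsic w_f w_e n g \<and> efficient n g)"
  using no_dsic_efficient_mechanism[of n w_f] assms(1,2) by auto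

end
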